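(* Consider the uncertain system \[ \dot x = f(x) + g(x)u + \varphi(x,u)\theta,\qquad \varphi(x,u)=[F(x)\;\; G(x)\,\mathrm{diag}(u)]\in\mathbb{R}^{n\times(p+m)}, \] with input $u\in\mathcal{U}\subseteq\mathbb{R}^m$, known locally Lipschitz $f,g$, known $F:\mathbb{R}^n\to\mathbb{R}^{n\times p}$, $G:\mathbb{R}^n\to\mathbb{R}^{n\times m}$, and unknown $\theta\in\mathbb{R}^{p+m}$ lying in a known hyperrectangle $\Theta=[\underline{\theta}_1,\overline{\theta}_1]\times\cdots\times[\underline{\theta}_{p+m},\overline{\theta}_{p+m}]$. Let $\{\Xi_k\}_{k\ge0}$ be the sequence of parameter sets generated by the integral set-membership identification scheme described below. Let $h:\mathbb{R}^n\to\mathbb{R}$ be continuously differentiable, $\mathcal{C}=\{x:h(x)\ge0\}$, and suppose there is an extended class $\mathcal{K}$ function $\alpha$ such that for all $x\in\mathcal{C}$ \[ \sup_{u\in\mathcal{U}}\inf_{\theta\in\Theta}\dot h(x,u,\theta)\ge-\alpha(h(x)),\qquad \dot h(x,u,\theta)=L_fh(x)+L_gh(x)u+L_\varphi h(x,u)\theta. \] Then $\sup_{u\in\mathcal{U}}\inf_{\theta\in\Xi_k}\dot h(x,u,\theta)\ge-\alpha(h(x))$ for all $x\in\mathcal{C}$ and all $k\in\mathbb{Z}_{\ge0}$.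
   Context: $L_fh=\nabla h\, f$, $L_gh=\nabla h\, g$, $L_\varphi h(x,u)=\nabla h(x)\varphi(x,u)$. Extended class $\mathcal{K}$: continuous strictly increasing $\alpha:\mathbb{R}\to\mathbb{R}$ with $\alpha(0)=0$. The identification scheme: let $x(\cdot)$ be a solution under an input signal $u(\cdot)$; fix $\Delta t>0$ and for $t\ge\Delta t$ let $\Delta x(t)=\int_{t-\Delta t}^t\dot x\,ds$, $\mathcal{F}(t)=\int_{t-\Delta t}^t f(x(s))ds$, $\mathcal{G}(t)=\int_{t-\Delta t}^t g(x(s))u(s)ds$, $\mathcal{S}(t)=\int_{t-\Delta t}^t\varphi(x(s),u(s))ds$. Let $\{t_k\}$ be strictly increasing with $t_0=0$; at time $t$ a history stack $\{\Delta x_j(t),\mathcal{F}_j(t),\mathcal{G}_j(t),\mathcal{S}_j(t)\}_{j\in\mathcal{M}(t)}$ consists of values of $(\Delta x,\mathcal{F},\mathcal{G},\mathcal{S})$ recorded at times in $[\Delta t,t]$. With $\varepsilon>0$, $\Xi_0=\Theta$, and for $k\ge1$, $\Xi_k=\prod_i[\underline\theta_i^k,\overline\theta_i^k]$ where $\underline\theta_i^k$ (resp. $\overline\theta_i^k$) is the minimum (resp. maximum) of $\theta_i$ over $\theta\in\Xi_{k-1}$ satisfying $-\varepsilon\mathbf{1}_n\le\Delta x_j(t_k)-\mathcal{F}_j(t_k)-\mathcal{G}_j(t_k)-\mathcal{S}_j(t_k)\theta\le\varepsilon\mathbf{1}_n$ for all $j\in\mathcal{M}(t_k)$ ($\mathbf{1}_n$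 the vector of ones, inequalities componentwise). *)

theory Defs
  imports "HOL-Analysis.Analysis" "HOL-Library.Extended_Real"
begin

text \<open>Regressor phi(x,u) = [F(x)  G(x) diag(u)], an n x (p+m) matrix; columns indexed by 'p + 'm.\<close>
definition phi :: "(real^'n \<Rightarrow> real^'p^'n) \<Rightarrow> (real^'n \<Rightarrow> real^'m^'n)
                   \<Rightarrow> real^'n \<Rightarrow> real^'m \<Rightarrow> real^('p + 'm)^'n" where
  "phi F G y u = (\<chi> i. \<chi> j. (case j of Inl a \<Rightarrow> F y $ i $ a | Inr b \<Rightarrow> G y $ i $ b * u $ b))"

definition Lf :: "(real^'n \<Rightarrow> real^'n) \<Rightarrow> (real^'n \<Rightarrow> real^'n) \<Rightarrow> real^'n \<Rightarrow> real" where
  "Lf Dh f y = Dh y \<bullet> f y"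
definition Lg :: "(real^'n \<Rightarrow> real^'n) \<Rightarrow> (real^'n \<Rightarrow> real^'m^'n) \<Rightarrow> real^'n \<Rightarrow> real^'m" where
  "Lg Dh g y = transpose (g y) *v Dh y"
definition Lphi :: "(real^'n \<Rightarrow> real^'n) \<Rightarrow> (real^'n \<Rightarrow> real^'q^'n) \<Rightarrow> real^'n \<Rightarrow> real^'q" where
  "Lphi Dh Phi y = transpose (Phi y) *v Dh y"

definition hdot :: "(real^'n \<Rightarrow> real^'n) \<Rightarrow> (real^'n \<Rightarrow> real^'n) \<Rightarrow> (real^'n \<Rightarrow> real^'m^'n)
     \<Rightarrow> (real^'n \<Rightarrow> real^'p^'n) \<Rightarrow> (real^'n \<Rightarrow> real^'m^'n)
     \<Rightarrow> real^'n \<Rightarrow> real^'m \<Rightarrow> real^('p+'m) \<Rightarrow> real" where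
  "hdot Dh f g F G y u th =
     Lf Dh f y + Lg Dh g y \<bullet> u + Lphi Dh (\<lambda>z. phi F G z u) y \<bullet> th"

definition ext_class_K :: "(real \<Rightarrow> real) \<Rightarrow> bool" where
  "ext_class_K \<alpha> \<longleftrightarrow> continuous_on UNIV \<alpha> \<and> strict_mono \<alpha> \<and> \<alpha> 0 = 0"

definition DeltaX :: "(real \<Rightarrow> real^'n) \<Rightarrow> real \<Rightarrow> real \<Rightarrow> real^'n" where
  "DeltaX x dt t = integral {t - dt..t} (\<lambda>s. vector_derivative x (at s within {0..}))"
definition FInt :: "(real^'n \<Rightarrow> real^'n) \<Rightarrow> (real \<Rightarrow> real^'n) \<Rightarrow> real \<Rightarrow> real \<Rightarrow> real^'n" where
  "FInt f x dt t = integral {t - dt..t} (\<lambda>s. f (x s))"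
definition GInt :: "(real^'n \<Rightarrow> real^'m^'n) \<Rightarrow> (real \<Rightarrow> real^'n) \<Rightarrow> (real \<Rightarrow> real^'m)
     \<Rightarrow> real \<Rightarrow> real \<Rightarrow> real^'n" where
  "GInt g x u dt t = integral {t - dt..t} (\<lambda>s. g (x s) *v u s)"
definition SInt :: "(real^'n \<Rightarrow> real^'p^'n) \<Rightarrow> (real^'n \<Rightarrow> real^'m^'n) \<Rightarrow> (real \<Rightarrow> real^'n)
     \<Rightarrow> (real \<Rightarrow> real^'m) \<Rightarrow> real \<Rightarrow> real \<Rightarrow> real^('p+'m)^'n" where
  "SInt F G x u dt t = integral {t - dt..t} (\<lambda>s. phi F G (x s) (u s))"

definition consistent :: "real \<Rightarrow> real^'n \<Rightarrow> real^'n \<Rightarrow> real^'n \<Rightarrow> real^'q^'n \<Rightarrow> real^'q \<Rightarrow> bool" where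
  "consistent eps dx Fi Gi Si th \<longleftrightarrow>
     (\<forall>c. - eps \<le> (dx - Fi - Gi - Si *v th) $ c \<and> (dx - Fi - Gi - Si *v th) $ c \<le> eps)"

text \<open>The stack at time t is the finite set stk t of
  recording times; entry at recording time tau is (DX tau, FI tau, GI tau, SI tau).\<close>
primrec Xi :: "real^'q \<Rightarrow> real^'q \<Rightarrow> real \<Rightarrow> (nat \<Rightarrow> real) \<Rightarrow> (real \<Rightarrow> real set)
     \<Rightarrow> (real \<Rightarrow> real^'n) \<Rightarrow> (real \<Rightarrow> real^'n) \<Rightarrow> (real \<Rightarrow> real^'n) \<Rightarrow> (real \<Rightarrow> real^'q^'n)
     \<Rightarrow> nat \<Rightarrow> (real^'q) set" where
  "Xi thlo thhi eps tk stk DX FI GI SI 0 = cbox thlo thhi"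
| "Xi thlo thhi eps tk stk DX FI GI SI (Suc k) =
     (let S = {th \<in> Xi thlo thhi eps tk stk DX FI GI SI k.
                 \<forall>\<tau>\<in>stk (tk (Suc k)). consistent eps (DX \<tau>) (FI \<tau>) (GI \<tau>) (SI \<tau>) th}
      in cbox (\<chi> i. Inf ((\<lambda>th. th $ i) ` S)) (\<chi> i. Sup ((\<lambda>th. th $ i) ` S)))"

end

theory Submission
  imports Defs
begin

text \<open>The true parameter satisfies every recorded data equation exactly: integrating the
  dynamics over a window gives \<open>\<Delta>x = \<F> + \<G> + \<S> \<theta>\<close>. Hence \<open>\<theta>\<close> is never discarded, so each set
  of consistent points is nonempty and its bounding box (whose coordinate Inf/Sup would
  otherwise be junk) stays inside \<open>\<Theta>\<close>; by induction every \<open>\<Xi>\<^sub>k\<close> is contained in \<open>\<Theta>\<close>.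
  Taking the infimum over a smaller parameter set can only increase it, so the robust barrier
  condition over \<open>\<Theta>\<close> passes to every \<open>\<Xi>\<^sub>k\<close>.\<close>

definition bounding_box :: "(real^'n) set \<Rightarrow> (real^'n) set" where
  "bounding_box S = cbox (\<chi> i. Inf ((\<lambda>z. z $ i) ` S)) (\<chi> i. Sup ((\<lambda>z. z $ i) ` S))"

lemma mem_bounding_box:
  fixes S :: "(real^'n) set"
  assumes "bounded S" and "z \<in> S"
  shows "z \<in> bounding_box S"
proof -
  have "bounded ((\<lambda>z. z $ i) ` S)" for i
    using bounded_linear_image[OF assms(1) bounded_linear_vec_nth] .
  then show ?thesis
    using assms(2) unfolding bounding_box_def mem_box_cart(2)
    by (auto intro!: cInf_lower cSup_upper bounded_imp_bdd_below bounded_imp_bdd_above)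
qed

lemma bounding_box_subset_cbox:
  fixes S :: "(real^'n) set"
  assumes "S \<subseteq> cbox a b" and "S \<noteq> {}"
  shows "bounding_box S \<subseteq> cbox a b"
proof -
  have "a $ i \<le> Inf ((\<lambda>z. z $ i) ` S)" "Sup ((\<lambda>z. z $ i) ` S) \<le> b $ i" for i
    using assms by (auto intro!: cInf_greatest cSup_least simp: mem_box_cart(2) subset_iff)
  then show ?thesis
    unfolding bounding_box_def mem_box_cart(2) subset_iff by simp (meson order_trans)
qed

lemma Xi_Suc_bounding_box:
  "Xi thlo thhi eps tk stk DX FI GI SI (Suc k) =
     bounding_box {th \<in> Xi thlo thhi eps tk stk DX FI GI SI k.
       \<forall>\<tau>\<in>stk (tk (Suc k)). consistent eps (DX \<tau>) (FI \<tau>) (GI \<tau>) (SI \<tau>) th}"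
  by (simp add: bounding_box_def Let_def)

lemma consistent_parameter_mem_Xi_subset_cbox:
  assumes "theta \<in> cbox thlo thhi"
    and "\<And>k \<tau>. \<tau> \<in> stk (tk (Suc k)) \<Longrightarrow> consistent eps (DX \<tau>) (FI \<tau>) (GI \<tau>) (SI \<tau>) theta"
  shows "theta \<in> Xi thlo thhi eps tk stk DX FI GI SI k
    \<and> Xi thlo thhi eps tk stk DX FI GI SI k \<subseteq> cbox thlo thhi"
proof (induction k)
  case 0
  then show ?case using assms(1) by simp
next
  case (Suc k)
  let ?S = "{th \<in> Xi thlo thhi eps tk stk DX FI GI SI k.
              \<forall>\<tau>\<in>stk (tk (Suc k)). consistent eps (DX \<tau>) (FI \<tau>) (GI \<tau>) (SI \<tau>) th}"
  have S_box: "?S \<subseteq> cbox thlo thhi" and theta_S: "theta \<in> ?S"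
    using Suc assms(2) by auto
  have "theta \<in> bounding_box ?S"
    using bounded_subset[OF bounded_cbox S_box] theta_S by (rule mem_bounding_box)
  moreover have "bounding_box ?S \<subseteq> cbox thlo thhi"
    using S_box theta_S by (intro bounding_box_subset_cbox) auto
  ultimately show ?case
    unfolding Xi_Suc_bounding_box by blast
qed

lemma bounded_linear_matrix_vector_mult_left:
  "bounded_linear (\<lambda>M::real^'q^'n. M *v v)"
proof -
  have "linear (\<lambda>M::real^'q^'n. M *v v)"
    by (rule linearI)
       (auto simp: matrix_vector_mult_def vec_eq_iff sum.distrib sum_distrib_left algebra_simps)
  then show ?thesis by (simp add: linear_conv_bounded_linear)
qed

lemma has_integral_DeltaX:
  assumes deriv: "\<And>t. t \<ge> 0 \<Longrightarrow> (x has_vector_derivative D t) (at t within {0..})"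
    and "0 \<le> dt" and "dt \<le> \<tau>"
  shows "(D has_integral DeltaX x dt \<tau>) {\<tau> - dt..\<tau>}"
proof -
  have window: "{\<tau> - dt..\<tau>} \<subseteq> {0..}" using assms(3) by auto
  have "(D has_integral (x \<tau> - x (\<tau> - dt))) {\<tau> - dt..\<tau>}"
    using assms(2) window
    by (intro fundamental_theorem_of_calculus)
       (auto intro!: has_vector_derivative_within_subset[OF deriv window])
  moreover have "vector_derivative x (at s within {0..}) = D s" if "s \<in> {\<tau> - dt..\<tau>}" for s
  proof (rule vector_derivative_within)
    have "s \<ge> 0" using that window by auto
    then have "s islimpt {0..s + 1}" by (subst islimpt_Icc) auto
    then show "at s within {0..} \<noteq> bot"
      by (simp add: trivial_limit_within islimpt_subset[of s "{0..s + 1}" "{0..}"])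
    show "(x has_vector_derivative D s) (at s within {0..})" using deriv \<open>s \<ge> 0\<close> .
  qed
  ultimately show ?thesis
    unfolding DeltaX_def by (metis (no_types, lifting) integral_cong integral_unique)
qed

lemma true_parameter_consistent:
  assumes sol: "\<And>t. t \<ge> 0 \<Longrightarrow> (x has_vector_derivative
                 (f (x t) + g (x t) *v u t + phi F G (x t) (u t) *v theta)) (at t within {0..})"
    and g_int: "(\<lambda>s. g (x s) *v u s) integrable_on {\<tau> - dt..\<tau>}"
    and phi_int: "(\<lambda>s. phi F G (x s) (u s)) integrable_on {\<tau> - dt..\<tau>}"
    and "0 \<le> dt" and "dt \<le> \<tau>" and "0 \<le> eps"
  shows "consistent eps (DeltaX x dt \<tau>) (FInt f x dt \<tau>) (GInt g x u dt \<tau>) (SInt F G x u dt \<tau>) theta"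
proof -
  let ?I = "{\<tau> - dt..\<tau>}"
  have DX: "((\<lambda>s. f (x s) + g (x s) *v u s + phi F G (x s) (u s) *v theta)
              has_integral DeltaX x dt \<tau>) ?I"
    using has_integral_DeltaX[OF sol assms(4,5)] .
  have S: "((\<lambda>s. phi F G (x s) (u s) *v theta) has_integral SInt F G x u dt \<tau> *v theta) ?I"
    unfolding SInt_def
    using has_integral_linear[OF integrable_integral[OF phi_int]
                              bounded_linear_matrix_vector_mult_left]
    by (simp add: o_def)
  have G: "((\<lambda>s. g (x s) *v u s) has_integral GInt g x u dt \<tau>) ?I"
    unfolding GInt_def using g_int by (rule integrable_integral)
  have "((\<lambda>s. f (x s)) has_integral
          DeltaX x dt \<tau> - GInt g x u dt \<tau> - SInt F G x u dt \<tau> *v theta) ?I"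
    using has_integral_diff[OF has_integral_diff[OF DX G] S] by simp
  then have "DeltaX x dt \<tau> - FInt f x dt \<tau> - GInt g x u dt \<tau> - SInt F G x u dt \<tau> *v theta = 0"
    unfolding FInt_def by (simp add: integral_unique)
  then show ?thesis unfolding consistent_def using \<open>0 \<le> eps\<close> by simp
qed

theorem proposition1:
  fixes f :: "real^'n \<Rightarrow> real^'n" and g :: "real^'n \<Rightarrow> real^'m^'n"
    and F :: "real^'n \<Rightarrow> real^'p^'n" and G :: "real^'n \<Rightarrow> real^'m^'n"
    and U :: "(real^'m) set"
    and thlo thhi :: "real^('p + 'm)" and theta :: "real^('p + 'm)"
    and h :: "real^'n \<Rightarrow> real" and Dh :: "real^'n \<Rightarrow> real^'n" and \<alpha> :: "real \<Rightarrow> real"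
    and x :: "real \<Rightarrow> real^'n" and u :: "real \<Rightarrow> real^'m"
    and dt eps :: real and tk :: "nat \<Rightarrow> real" and stk :: "real \<Rightarrow> real set"
  assumes f_lip: "\<forall>y. \<exists>r>0. \<exists>L. L-lipschitz_on (ball y r) f"
    and g_lip: "\<forall>y. \<exists>r>0. \<exists>L. L-lipschitz_on (ball y r) g"
    and theta_in: "theta \<in> cbox thlo thhi"
    and h_deriv: "\<forall>y. (h has_derivative (\<lambda>v. Dh y \<bullet> v)) (at y)"
    and h_C1: "continuous_on UNIV Dh"
    and alpha_K: "ext_class_K \<alpha>"
    and cbf: "\<forall>y. h y \<ge> 0 \<longrightarrow>
        (SUP v\<in>U. INF th\<in>cbox thlo thhi. ereal (hdot Dh f g F G y v th)) \<ge> ereal (- \<alpha> (h y))"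
    and dt_pos: "dt > 0" and eps_pos: "eps > 0"
    and sol: "\<forall>t\<ge>0. (x has_vector_derivative
                 (f (x t) + g (x t) *v u t + phi F G (x t) (u t) *v theta)) (at t within {0..})"
    and u_in: "\<forall>t\<ge>0. u t \<in> U"
    and integrable: "\<forall>t\<ge>dt. (\<lambda>s. g (x s) *v u s) integrable_on {t - dt..t}
                             \<and> (\<lambda>s. phi F G (x s) (u s)) integrable_on {t - dt..t}"
    and tk_mono: "strict_mono tk" and tk0: "tk 0 = 0"
    and stack: "\<forall>t. finite (stk t) \<and> stk t \<subseteq> {dt..t}"
  shows "\<forall>y. h y \<ge> 0 \<longrightarrow> (\<forall>k.
     (SUP v\<in>U. INF th\<in>Xi thlo thhi eps tk stk (DeltaX x dt) (FInt f x dt) (GInt g x u dt)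
                               (SInt F G x u dt) k. ereal (hdot Dh f g F G y v th))
       \<ge> ereal (- \<alpha> (h y)))"
proof (intro allI impI)
  fix y k assume "h y \<ge> 0"
  let ?Xi = "Xi thlo thhi eps tk stk (DeltaX x dt) (FInt f x dt) (GInt g x u dt) (SInt F G x u dt)"
  have "consistent eps (DeltaX x dt \<tau>) (FInt f x dt \<tau>) (GInt g x u dt \<tau>) (SInt F G x u dt \<tau>) theta"
    if "\<tau> \<in> stk (tk (Suc j))" for j \<tau>
  proof -
    have "dt \<le> \<tau>" using stack that by (meson atLeastAtMost_iff subsetD)
    then show ?thesis
      using integrable dt_pos eps_pos by (intro true_parameter_consistent) (use sol in auto)
  qed
  then have "?Xi k \<subseteq> cbox thlo thhi"
    using consistent_parameter_mem_Xi_subset_cbox[OF theta_in] by blast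
  then have "(SUP v\<in>U. INF th\<in>cbox thlo thhi. ereal (hdot Dh f g F G y v th))
              \<le> (SUP v\<in>U. INF th\<in>?Xi k. ereal (hdot Dh f g F G y v th))"
    by (intro SUP_subset_mono INF_superset_mono order_refl)
  then show "(SUP v\<in>U. INF th\<in>?Xi k. ereal (hdot Dh f g F G y v th)) \<ge> ereal (- \<alpha> (h y))"
    using cbf \<open>h y \<ge> 0\<close> by (meson order_trans)
qed

end
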